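(* Let $\mu\in\mathbb{C}$ with $\mu\notin\frac12\mathbb{Z}$ or $\mu\in\mathbb{Z}$, and let $\varphi$ be a $\frac12$-derivation of $\widetilde{L_{1,\mu}}^1$. Then there exist $\lambda_1\in\mathbb{C}$ and two families of complex numbers $\{\alpha_t\}_{t\in\mathbb{Z}}$, $\{\beta_t\}_{t\in\mathbb{Z}}$ such that for all $m\in\mathbb{Z}$: $\varphi(L_m)=\lambda_1L_m+\sum_{t\in\mathbb{Z}}\alpha_tM_{m+t}+\sum_{t\in\mathbb{Z}}\beta_tY_{m+t+\frac12}$, $\varphi(Y_{m+\frac12})=\lambda_1Y_{m+\frac12}+\sum_{t\in\mathbb{Z}}\beta_tM_{m+t+1}$, $\varphi(M_m)=\lambda_1M_m$, $\varphi(C_L)=\lambda_1C_L$.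
   Context: For $\mu\in\mathbb{C}$, $\widetilde{L_{1,\mu}}^1$ is the complex Lie algebra with basis $\{L_n,M_n,Y_{n+\frac12},C_L\mid n\in\mathbb{Z}\}$, $C_L$ central, and nonzero brackets $[L_m,L_n]=(n-m)L_{m+n}+\frac{m^3-m}{12}\delta_{m+n,0}C_L$, $[L_m,M_n]=(n-m+2\mu)M_{m+n}$, $[L_m,Y_{n+\frac12}]=(n+\frac12-m+\mu)Y_{m+n+\frac12}$, $[Y_{m+\frac12},Y_{n+\frac12}]=(n-m)M_{m+n+1}$. A $\frac12$-derivation is a linear map $\varphi$ with $\varphi([x,y])=\frac12([\varphi(x),y]+[x,\varphi(y)])$ for all $x,y$. The sums are understood as elements of the algebra (finitely many nonzero terms). *)

theory Defs
  imports Complex_Main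
begin

text \<open>Basis of the Lie algebra: L n = L_n, M n = M_n, Y n = Y_{n+1/2}, C = C_L.\<close>
datatype bas = L int | M int | Y int | C

text \<open>Algebra elements: finitely supported coefficient functions on the basis.\<close>
definition fin :: "(bas \<Rightarrow> complex) \<Rightarrow> bool" where
  "fin f \<longleftrightarrow> finite {b. f b \<noteq> 0}"

definition supp :: "(bas \<Rightarrow> complex) \<Rightarrow> bas set" where
  "supp f = {b. f b \<noteq> 0}"

definition e :: "bas \<Rightarrow> bas \<Rightarrow> complex" where
  "e b = (\<lambda>x. if x = b then 1 else 0)"

definition vadd :: "(bas \<Rightarrow> complex) \<Rightarrow> (bas \<Rightarrow> complex) \<Rightarrow> bas \<Rightarrow> complex" where
  "vadd f g = (\<lambda>x. f x + g x)"

definition vsmul :: "complex \<Rightarrow> (bas \<Rightarrow> complex) \<Rightarrow> bas \<Rightarrow> complex" where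
  "vsmul c f = (\<lambda>x. c * f x)"

fun br :: "complex \<Rightarrow> bas \<Rightarrow> bas \<Rightarrow> bas \<Rightarrow> complex" where
  "br \<mu> (L m) (L n) = vadd (vsmul (of_int (n - m)) (e (L (m + n))))
        (vsmul (if m + n = 0 then of_int (m^3 - m) / 12 else 0) (e C))"
| "br \<mu> (L m) (M n) = vsmul (of_int (n - m) + 2 * \<mu>) (e (M (m + n)))"
| "br \<mu> (M n) (L m) = vsmul (- (of_int (n - m) + 2 * \<mu>)) (e (M (m + n)))"
| "br \<mu> (L m) (Y n) = vsmul (of_int n + 1/2 - of_int m + \<mu>) (e (Y (m + n)))"
| "br \<mu> (Y n) (L m) = vsmul (- (of_int n + 1/2 - of_int m + \<mu>)) (e (Y (m + n)))"
| "br \<mu> (Y m) (Y n) = vsmul (of_int (n - m)) (e (M (m + n + 1)))"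
| "br \<mu> _ _ = (\<lambda>_. 0)"

definition bracket :: "complex \<Rightarrow> (bas \<Rightarrow> complex) \<Rightarrow> (bas \<Rightarrow> complex) \<Rightarrow> bas \<Rightarrow> complex" where
  "bracket \<mu> x y = (\<lambda>z. \<Sum>a\<in>supp x. \<Sum>b\<in>supp y. x a * y b * br \<mu> a b z)"

definition half_derivation :: "complex \<Rightarrow> ((bas \<Rightarrow> complex) \<Rightarrow> (bas \<Rightarrow> complex)) \<Rightarrow> bool" where
  "half_derivation \<mu> \<phi> \<longleftrightarrow>
     (\<forall>x. fin x \<longrightarrow> fin (\<phi> x)) \<and>
     (\<forall>x y. fin x \<longrightarrow> fin y \<longrightarrow> \<phi> (vadd x y) = vadd (\<phi> x) (\<phi> y)) \<and>
     (\<forall>c x. fin x \<longrightarrow> \<phi> (vsmul c x) = vsmul c (\<phi> x)) \<and>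
     (\<forall>x y. fin x \<longrightarrow> fin y \<longrightarrow>
        \<phi> (bracket \<mu> x y) = vsmul (1/2) (vadd (bracket \<mu> (\<phi> x) y) (bracket \<mu> x (\<phi> y))))"

end

theory Submission
  imports Defs
begin

text \<open>Since ad L m maps each basis vector to a multiple of a single basis vector, the
  1/2-Leibniz rule for [L m, b], read off at a basis vector z, is a linear relation between
  single coefficients of \<phi> (L m), \<phi> (b) and \<phi> ([L m, b]). For b = L n these relations
  show that \<phi> (L m) has L-part \<lambda> L m and no C-part, that its M- and Y-parts are
  translates of those of \<phi> (L 0), and that \<phi> (C) = \<lambda> C. The central term of the
  Virasoro bracket is what kills the off-diagonal L-part, and \<mu> \<notin> 1/2 + \<int> is what
  makes the factors of the Y-components nonzero.
  For b = M n or Y n, the deviation of \<phi> (M n) resp. \<phi> (Y n) from the claimed value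
  is a family r n with (n - m + \<omega>) r (m + n) = 1/2 [L m, r n], where \<omega> is the weight
  2 \<mu> resp. 1/2 + \<mu>. Comparing weights for m = 0 and m = \<plusminus>1 shows that every such
  family vanishes.\<close>

lemma fin_e: "fin (e b)"
  unfolding fin_def e_def by (rule finite_subset[of _ "{b}"]) auto

lemma supp_e: "supp (e b) = {b}"
  by (auto simp: supp_def e_def)

lemma e_apply: "e b z = (if z = b then 1 else 0)"
  by (simp add: e_def)

lemma sum_supp_single:
  assumes "fin f" and "\<And>a. a \<noteq> a0 \<Longrightarrow> g a = 0"
  shows "(\<Sum>a\<in>supp f. f a * g a) = f a0 * g a0"
proof -
  have "(\<Sum>a\<in>supp f. f a * g a) = (\<Sum>a\<in>supp f. if a = a0 then f a0 * g a0 else 0)"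
    using assms(2) by (intro sum.cong) auto
  also have "\<dots> = f a0 * g a0"
    using assms(1) by (simp add: fin_def supp_def)
  finally show ?thesis .
qed

lemma sum_support_e:
  assumes "finite {t. f t \<noteq> 0}" and "\<And>t. z = g t \<longleftrightarrow> t = t0"
  shows "(\<Sum>t | f t \<noteq> 0. f t * e (g t) z) = f t0"
proof -
  have "(\<Sum>t | f t \<noteq> 0. f t * e (g t) z) = (\<Sum>t | f t \<noteq> 0. if t = t0 then f t else 0)"
    by (intro sum.cong) (simp_all add: e_apply assms(2))
  also have "\<dots> = f t0"
    using assms(1) by simp
  finally show ?thesis .
qed

lemma finite_components:
  assumes "fin x" and "inj g"
  shows "finite {t. x (g t) \<noteq> 0}"
  using finite_vimageI[OF assms(1)[unfolded fin_def] assms(2)] by (simp add: vimage_def)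

lemma bracket_e_e: "bracket \<mu> (e a) (e b) = br \<mu> a b"
  by (simp add: bracket_def supp_e e_apply)

lemma bracket_e_left: "bracket \<mu> (e a) y z = (\<Sum>b\<in>supp y. y b * br \<mu> a b z)"
  by (simp add: bracket_def supp_e e_apply)

lemma br_antisym: "br \<mu> b a z = - br \<mu> a b z"
proof (cases a)
  case (L m)
  show ?thesis
  proof (cases b)
    case (L n)
    show ?thesis
    proof (cases "m + n = 0")
      case True
      then have "n = - m" by simp
      with \<open>a = L m\<close> L show ?thesis
        by (auto simp: vadd_def vsmul_def e_def algebra_simps diff_divide_distrib)
    qed (use \<open>a = L m\<close> L in \<open>auto simp: vadd_def vsmul_def e_def algebra_simps\<close>)
  qed (auto simp: L vadd_def vsmul_def e_def algebra_simps)
qed (cases b; auto simp: vadd_def vsmul_def e_def algebra_simps)+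

lemma bracket_antisym: "bracket \<mu> y x z = - bracket \<mu> x y z"
proof -
  have "bracket \<mu> y x z = (\<Sum>b\<in>supp x. \<Sum>a\<in>supp y. - (x b * y a * br \<mu> b a z))"
    unfolding bracket_def
    by (subst sum.swap) (intro sum.cong refl, subst br_antisym, simp)
  then show ?thesis
    by (simp add: bracket_def sum_negf)
qed

text \<open>For z = C the source is L (-m): the C-component comes from the central term.\<close>

fun adL_source :: "int \<Rightarrow> bas \<Rightarrow> bas" where
  "adL_source m (L k) = L (k - m)"
| "adL_source m (M k) = M (k - m)"
| "adL_source m (Y k) = Y (k - m)"
| "adL_source m C = L (- m)"

fun adL_coeff :: "complex \<Rightarrow> int \<Rightarrow> bas \<Rightarrow> complex" where
  "adL_coeff \<mu> m (L k) = of_int (k - m - m)"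
| "adL_coeff \<mu> m (M k) = of_int (k - m - m) + 2 * \<mu>"
| "adL_coeff \<mu> m (Y k) = of_int (k - m) + 1/2 - of_int m + \<mu>"
| "adL_coeff \<mu> m C = of_int (m^3 - m) / 12"

lemma br_L_left: "br \<mu> (L m) b z = (if b = adL_source m z then adL_coeff \<mu> m z else 0)"
  by (cases z; cases b) (auto simp: vadd_def vsmul_def e_def)

lemma bracket_L_left:
  assumes "fin x"
  shows "bracket \<mu> (e (L m)) x z = adL_coeff \<mu> m z * x (adL_source m z)"
  unfolding bracket_e_left
  by (subst sum_supp_single[OF assms, of "adL_source m z"]) (simp_all add: br_L_left)

lemma br_M_left_not_M: "br \<mu> (M n) b (L k) = 0" "br \<mu> (M n) b (Y k) = 0" "br \<mu> (M n) b C = 0"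
  by (cases b; simp add: vsmul_def e_def)+

lemma br_Y_left_not_M_Y: "br \<mu> (Y n) b (L k) = 0" "br \<mu> (Y n) b C = 0"
  by (cases b; simp add: vsmul_def e_def)+

lemma bracket_M_left:
  assumes "fin x"
  shows "bracket \<mu> (e (M n)) x z =
    (case z of M k \<Rightarrow> - (of_int (n - (k - n)) + 2 * \<mu>) * x (L (k - n)) | _ \<Rightarrow> 0)"
proof (cases z)
  case (M k)
  have "bracket \<mu> (e (M n)) x z = x (L (k - n)) * br \<mu> (M n) (L (k - n)) z"
    unfolding bracket_e_left
  proof (rule sum_supp_single[OF assms])
    show "br \<mu> (M n) b z = 0" if "b \<noteq> L (k - n)" for b
      using M that by (cases b) (auto simp: vsmul_def e_def)
  qed
  then show ?thesis
    using M by (simp add: vsmul_def e_def)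
qed (simp_all add: bracket_e_left br_M_left_not_M br_Y_left_not_M_Y)

lemma bracket_Y_left:
  assumes "fin x"
  shows "bracket \<mu> (e (Y n)) x z =
    (case z of Y k \<Rightarrow> - (of_int n + 1/2 - of_int (k - n) + \<mu>) * x (L (k - n))
             | M k \<Rightarrow> of_int (k - n - 1 - n) * x (Y (k - n - 1)) | _ \<Rightarrow> 0)"
proof (cases z)
  case (M k)
  have "bracket \<mu> (e (Y n)) x z = x (Y (k - n - 1)) * br \<mu> (Y n) (Y (k - n - 1)) z"
    unfolding bracket_e_left
  proof (rule sum_supp_single[OF assms])
    show "br \<mu> (Y n) b z = 0" if "b \<noteq> Y (k - n - 1)" for b
      using M that by (cases b) (auto simp: vsmul_def e_def)
  qed
  then show ?thesis
    using M by (simp add: vsmul_def e_def)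
next
  case (Y k)
  have "bracket \<mu> (e (Y n)) x z = x (L (k - n)) * br \<mu> (Y n) (L (k - n)) z"
    unfolding bracket_e_left
  proof (rule sum_supp_single[OF assms])
    show "br \<mu> (Y n) b z = 0" if "b \<noteq> L (k - n)" for b
      using Y that by (cases b) (auto simp: vsmul_def e_def)
  qed
  then show ?thesis
    using Y by (simp add: vsmul_def e_def)
qed (simp_all add: bracket_e_left br_M_left_not_M br_Y_left_not_M_Y)

lemma bracket_C_left: "bracket \<mu> (e C) x z = 0"
  by (simp add: bracket_e_left)

fun weight :: "complex \<Rightarrow> bas \<Rightarrow> complex" where
  "weight \<mu> (L k) = of_int k"
| "weight \<mu> (M k) = of_int k + 2 * \<mu>"
| "weight \<mu> (Y k) = of_int k + 1/2 + \<mu>"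
| "weight \<mu> C = 0"

lemma weight_adL_source: "weight \<mu> (adL_source m z) = weight \<mu> z - of_int m"
  by (cases z) simp_all

lemma adL_coeff_0: "adL_coeff \<mu> 0 z * f (adL_source 0 z) = weight \<mu> z * f z"
  by (cases z) simp_all

text \<open>With m = 0 the hypothesis forces weight \<mu> z = 2 (N + \<omega>) wherever r N z \<noteq> 0; the
  instance m = \<plusminus>1 then ties r N z to a component of r (N - m) of the wrong weight.\<close>

lemma half_equivariant_family_eq_0:
  fixes r :: "int \<Rightarrow> bas \<Rightarrow> complex"
  assumes eq: "\<And>m n z. (of_int n - of_int m + \<omega>) * r (m + n) z
                          = 1/2 * (adL_coeff \<mu> m z * r n (adL_source m z))"
  shows "r N z = 0"
proof (rule ccontr)
  assume rNz: "r N z \<noteq> 0"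
  have weight_supp: "weight \<mu> w = 2 * (of_int n + \<omega>)" if "r n w \<noteq> 0" for n w
  proof -
    have "(of_int n + \<omega> - 1/2 * weight \<mu> w) * r n w = 0"
      using eq[of n 0 w] by (simp add: adL_coeff_0 algebra_simps)
    with that have "of_int n + \<omega> - 1/2 * weight \<mu> w = 0"
      by simp
    then show ?thesis
      by (simp add: field_simps)
  qed
  obtain m :: int where "m \<noteq> 0" and m_nz: "of_int (N - m) - of_int m + \<omega> \<noteq> 0"
  proof (cases "of_int N - 2 + \<omega> = 0")
    case True
    have "of_int (N - (-1)) - of_int (-1) + \<omega> = (of_int N - 2 + \<omega>) + 4"
      by (simp add: algebra_simps)
    then have "of_int (N - (-1)) - of_int (-1) + \<omega> \<noteq> 0"
      by (simp only: True add_0_left) simp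
    then show ?thesis
      by (rule that[rotated]) simp
  next
    case False
    then show ?thesis
      using that[of 1] by (simp add: algebra_simps)
  qed
  have "r (N - m) (adL_source m z) = 0"
  proof (rule ccontr)
    assume "r (N - m) (adL_source m z) \<noteq> 0"
    then have "weight \<mu> z - of_int m = 2 * (of_int (N - m) + \<omega>)"
      unfolding weight_adL_source[symmetric] by (rule weight_supp)
    moreover have "weight \<mu> z = 2 * (of_int N + \<omega>)"
      using weight_supp[OF rNz] .
    ultimately show False
      using \<open>m \<noteq> 0\<close> by (simp add: algebra_simps)
  qed
  then have "(of_int (N - m) - of_int m + \<omega>) * r N z = 0"
    using eq[of "N - m" m z] by simp
  with m_nz rNz show False
    by simp
qed

lemma half_equivariant_solution_unique:
  assumes f: "\<And>m n z. (of_int n - of_int m + \<omega>) * f (m + n) z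
                          = 1/2 * (adL_coeff \<mu> m z * f n (adL_source m z)) - h m n z"
    and g: "\<And>m n z. (of_int n - of_int m + \<omega>) * g (m + n) z
                          = 1/2 * (adL_coeff \<mu> m z * g n (adL_source m z)) - h m n z"
  shows "f N z = g N z"
proof -
  have "(of_int n - of_int m + \<omega>) * (f (m + n) z - g (m + n) z)
          = 1/2 * (adL_coeff \<mu> m z * (f n (adL_source m z) - g n (adL_source m z)))" for m n z
    by (simp only: right_diff_distrib f g) (simp add: algebra_simps)
  from half_equivariant_family_eq_0[OF this] show ?thesis
    by simp
qed

lemma half_integer_shift_nonzero:
  fixes \<mu> :: complex
  assumes "(\<forall>k::int. \<mu> \<noteq> of_int k / 2) \<or> \<mu> \<in> \<int>"
  shows "of_int j + 1/2 + \<mu> \<noteq> 0"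
proof
  assume "of_int j + 1/2 + \<mu> = 0"
  then have \<mu>_eq: "\<mu> = of_int (- 2 * j - 1) / 2"
    by (simp add: field_simps) (simp add: algebra_simps eq_neg_iff_add_eq_0)
  from assms show False
  proof
    assume "\<mu> \<in> \<int>"
    then obtain i where "\<mu> = of_int i"
      by (auto elim: Ints_cases)
    with \<mu>_eq have "(of_int (2 * i) :: complex) = of_int (- 2 * j - 1)"
      by (simp add: field_simps)
    then have "2 * i = - 2 * j - 1"
      by (simp only: of_int_eq_iff)
    then show False
      by presburger
  qed (use \<mu>_eq in blast)
qed

context
  fixes \<mu> :: complex and \<phi> :: "(bas \<Rightarrow> complex) \<Rightarrow> (bas \<Rightarrow> complex)"
  assumes hd: "half_derivation \<mu> \<phi>"
begin

lemma fin_phi_e: "fin (\<phi> (e b))"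
  using hd fin_e unfolding half_derivation_def by blast

lemma finite_phi_e_components:
  "finite {t. \<phi> (e b) (M t) \<noteq> 0}" "finite {t. \<phi> (e b) (Y t) \<noteq> 0}"
  by (rule finite_components[OF fin_phi_e], simp add: inj_def)+

lemma phi_smult_e: "\<phi> (vsmul c (e b)) z = c * \<phi> (e b) z"
proof -
  have "\<phi> (vsmul c (e b)) = vsmul c (\<phi> (e b))"
    using hd fin_e unfolding half_derivation_def by blast
  then show ?thesis
    by (simp add: vsmul_def)
qed

lemma phi_zero: "\<phi> (\<lambda>_. 0) z = 0"
  using phi_smult_e[of 0 C z] by (simp add: vsmul_def)

lemma phi_br_L_L:
  "\<phi> (br \<mu> (L m) (L n)) z = of_int (n - m) * \<phi> (e (L (m + n))) z
     + (if m + n = 0 then of_int (m^3 - m) / 12 else 0) * \<phi> (e C) z"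
proof -
  have "fin (vsmul c (e b))" for c b
    unfolding fin_def vsmul_def e_def by (rule finite_subset[of _ "{b}"]) auto
  then show ?thesis
    using hd unfolding half_derivation_def by (simp add: vadd_def phi_smult_e)
qed

lemma phi_br_basis:
  "\<phi> (br \<mu> a b) z = 1/2 * (bracket \<mu> (e a) (\<phi> (e b)) z - bracket \<mu> (e b) (\<phi> (e a)) z)"
proof -
  have "\<phi> (bracket \<mu> (e a) (e b))
          = vsmul (1/2) (vadd (bracket \<mu> (\<phi> (e a)) (e b)) (bracket \<mu> (e a) (\<phi> (e b))))"
    using hd fin_e unfolding half_derivation_def by blast
  then show ?thesis
    by (simp add: bracket_e_e vsmul_def vadd_def bracket_antisym[of \<mu> "\<phi> (e a)"] fun_eq_iff)
qed

lemma phi_br_L_left: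
  "\<phi> (br \<mu> (L m) b) z = 1/2 * (adL_coeff \<mu> m z * \<phi> (e b) (adL_source m z)
                                - bracket \<mu> (e b) (\<phi> (e (L m))) z)"
  by (simp add: phi_br_basis bracket_L_left[OF fin_phi_e])

lemma phi_L_L_equation:
  assumes "N = m + n"
  shows "of_int (n - m) * \<phi> (e (L N)) z
           + (if m + n = 0 then of_int (m^3 - m) / 12 else 0) * \<phi> (e C) z
    = 1/2 * (adL_coeff \<mu> m z * \<phi> (e (L n)) (adL_source m z)
             - adL_coeff \<mu> n z * \<phi> (e (L m)) (adL_source n z))"
  using phi_br_L_left[of m "L n" z] assms
  unfolding phi_br_L_L by (simp add: bracket_L_left[OF fin_phi_e])

lemma phi_L_M_equation:
  "(of_int n - of_int m + 2 * \<mu>) * \<phi> (e (M (m + n))) z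
    = 1/2 * (adL_coeff \<mu> m z * \<phi> (e (M n)) (adL_source m z))
      - 1/2 * bracket \<mu> (e (M n)) (\<phi> (e (L m))) z"
  using phi_br_L_left[of m "M n" z] by (simp add: phi_smult_e right_diff_distrib)

lemma phi_L_Y_equation:
  "(of_int n - of_int m + (1/2 + \<mu>)) * \<phi> (e (Y (m + n))) z
    = 1/2 * (adL_coeff \<mu> m z * \<phi> (e (Y n)) (adL_source m z))
      - 1/2 * bracket \<mu> (e (Y n)) (\<phi> (e (L m))) z"
  using phi_br_L_left[of m "Y n" z]
  by (simp add: phi_smult_e right_diff_distrib, simp add: algebra_simps)

lemma phi_L_C_equation: "adL_coeff \<mu> n z * \<phi> (e C) (adL_source n z) = 0"
  using phi_br_L_left[of n C z] by (simp add: phi_zero bracket_C_left)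

end

definition scalar_coeff :: "((bas \<Rightarrow> complex) \<Rightarrow> (bas \<Rightarrow> complex)) \<Rightarrow> complex" where
  "scalar_coeff \<phi> = \<phi> (e (L 0)) (L 0)"

context
  fixes \<mu> :: complex and \<phi> :: "(bas \<Rightarrow> complex) \<Rightarrow> (bas \<Rightarrow> complex)"
  assumes hd: "half_derivation \<mu> \<phi>"
    and hmu: "\<And>j::int. of_int j + 1/2 + \<mu> \<noteq> 0"
begin

lemma phi_C_not_C: "z \<noteq> C \<Longrightarrow> \<phi> (e C) z = 0"
proof (cases z)
  case (L j)
  then show ?thesis
    using phi_L_C_equation[OF hd, of "j + 1" "L (2 * j + 1)"] by simp
next
  case (M j)
  show ?thesis
  proof (cases "\<mu> = 0")
    case True
    then show ?thesis
      using M phi_L_C_equation[OF hd, of "j + 1" "M (2 * j + 1)"] by simp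
  next
    case False
    then show ?thesis
      using M phi_L_C_equation[OF hd, of j "M (2 * j)"] by simp
  qed
next
  case (Y j)
  then show ?thesis
    using phi_L_C_equation[OF hd, of 0 "Y j"] hmu[of j] by simp
qed simp

lemma phi_L_L_shift:
  assumes "k \<noteq> 2 * m"
  shows "\<phi> (e (L m)) (L k) = \<phi> (e (L 0)) (L (k - m))"
proof -
  have "of_int (k - 2 * m) * (\<phi> (e (L m)) (L k) - \<phi> (e (L 0)) (L (k - m))) = 0"
    using phi_L_L_equation[OF hd, of m m 0 "L k"] by (simp add: phi_C_not_C algebra_simps)
  moreover have "(of_int (k - 2 * m) :: complex) \<noteq> 0"
    unfolding of_int_eq_0_iff using assms by simp
  ultimately show ?thesis
    by (metis mult_eq_0_iff right_minus_eq)
qed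

text \<open>The central components of [L s, L 0] and [L (-2 s), L (3 s)] give two linear relations
  between \<phi> (L s) at C and \<phi> (L 0) at L (-s), which together force the latter to vanish.\<close>

lemma phi_L0_L:
  assumes "t \<noteq> 0"
  shows "\<phi> (e (L 0)) (L t) = 0"
proof -
  define s where "s = - t"
  define S where "S = (of_int s :: complex)"
  define X where "X = \<phi> (e (L 0)) (L t)"
  define D where "D = \<phi> (e (L s)) C"
  have "s \<noteq> 0" and "S \<noteq> 0"
    using assms by (simp_all add: s_def S_def)
  have "\<phi> (e (L (3 * s))) (L (2 * s)) = X" "\<phi> (e (L (-2 * s))) (L (-3 * s)) = X"
    using phi_L_L_shift[of "2 * s" "3 * s"] phi_L_L_shift[of "-3 * s" "-2 * s"] \<open>s \<noteq> 0\<close>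
    by (simp_all add: X_def s_def)
  then have e2: "5 * S * D = 1/2 * (((-2 * S)^3 + 2 * S) / 12 * X - ((3 * S)^3 - 3 * S) / 12 * X)"
    using phi_L_L_equation[OF hd, of s "-2 * s" "3 * s" C] \<open>s \<noteq> 0\<close>
    by (simp add: S_def D_def of_int_power algebra_simps)
  have e1: "S * D = - (1/2) * ((S^3 - S) / 12) * X"
    using phi_L_L_equation[OF hd, of s s 0 C] \<open>s \<noteq> 0\<close>
    by (simp add: S_def D_def X_def s_def of_int_power)
  have "30 * S^3 * X = 0"
    using e1 e2 by algebra
  with \<open>S \<noteq> 0\<close> show ?thesis
    by (simp add: X_def)
qed

lemma phi_L_L: "\<phi> (e (L m)) (L k) = (if k = m then scalar_coeff \<phi> else 0)"
proof -
  have "\<phi> (e (L m)) (L (2 * m)) = 0" if "m \<noteq> 0"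
  proof -
    have "\<phi> (e (L (4 * m))) (L (5 * m)) = 0" "\<phi> (e (L (3 * m))) (L (4 * m)) = 0"
      using phi_L_L_shift[of "5 * m" "4 * m"] phi_L_L_shift[of "4 * m" "3 * m"] phi_L0_L[of m] that
      by simp_all
    then have "of_int m * \<phi> (e (L m)) (L (2 * m)) = 0"
      using phi_L_L_equation[OF hd, of "4 * m" m "3 * m" "L (5 * m)"] by (simp add: phi_C_not_C)
    with that show ?thesis
      by simp
  qed
  then show ?thesis
    using phi_L_L_shift[of k m] phi_L0_L[of "k - m"]
    by (cases "k = 2 * m") (auto simp: scalar_coeff_def)
qed

lemma phi_L_C: "\<phi> (e (L m)) C = 0"
proof (cases "m = 0")
  case True
  then show ?thesis
    using phi_L_L_equation[OF hd, of 0 1 "-1" C] by simp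
next
  case False
  then show ?thesis
    using phi_L_L_equation[OF hd, of m 0 m C] phi_L0_L[of "- m"] by simp
qed

lemma phi_C_C: "\<phi> (e C) C = scalar_coeff \<phi>"
  using phi_L_L_equation[OF hd, of 0 2 "-2" C] phi_L_C[of 0] phi_L_L[of 2 2] phi_L_L[of "-2" "-2"]
  by simp

lemma phi_L_M_shift:
  assumes "of_int (k - 2 * m) + 2 * \<mu> \<noteq> 0"
  shows "\<phi> (e (L m)) (M k) = \<phi> (e (L 0)) (M (k - m))"
proof -
  have "(of_int (k - 2 * m) + 2 * \<mu>) * (\<phi> (e (L m)) (M k) - \<phi> (e (L 0)) (M (k - m))) = 0"
    using phi_L_L_equation[OF hd, of m m 0 "M k"] by (simp add: phi_C_not_C field_simps)
  with assms show ?thesis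
    by simp
qed

text \<open>If the weight factor vanishes, go through [L m, L (3 m)] = 2 m L (4 m), where the
  corresponding factors are - 3 m and - 2 m.\<close>

lemma phi_L_M: "\<phi> (e (L m)) (M k) = \<phi> (e (L 0)) (M (k - m))"
proof (cases "of_int (k - 2 * m) + 2 * \<mu> = 0 \<and> m \<noteq> 0")
  case True
  then have h: "2 * \<mu> = - of_int (k - 2 * m)"
    by (simp only: eq_neg_iff_add_eq_0 add.commute)
  then have h': "\<mu> = (2 * of_int m - of_int k) / 2"
    by (simp add: field_simps)
  from True have "m \<noteq> 0"
    by simp
  define B where "B = \<phi> (e (L 0)) (M (k - m))"
  have "\<phi> (e (L (4 * m))) (M (k + 3 * m)) = B" "\<phi> (e (L (3 * m))) (M (k + 2 * m)) = B"
    using phi_L_M_shift[of "k + 3 * m" "4 * m"] phi_L_M_shift[of "k + 2 * m" "3 * m"] \<open>m \<noteq> 0\<close>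
    by (simp_all add: h B_def)
  then have "of_int (2 * m) * B = 1/2 * (3 * of_int m * B + of_int m * \<phi> (e (L m)) (M k))"
    using phi_L_L_equation[OF hd, of "4 * m" m "3 * m" "M (k + 3 * m)"]
    by (simp add: phi_C_not_C h' field_simps)
  with \<open>m \<noteq> 0\<close> have "B = \<phi> (e (L m)) (M k)"
    by (simp add: field_simps)
  then show ?thesis
    by (simp add: B_def)
next
  case False
  then show ?thesis
    using phi_L_M_shift by fastforce
qed

lemma phi_L_Y: "\<phi> (e (L m)) (Y k) = \<phi> (e (L 0)) (Y (k - m))"
proof -
  have "(of_int (k - 2 * m) + 1/2 + \<mu>) * (\<phi> (e (L m)) (Y k) - \<phi> (e (L 0)) (Y (k - m))) = 0"
    using phi_L_L_equation[OF hd, of m m 0 "Y k"] by (simp add: phi_C_not_C) algebra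
  with hmu[of "k - 2 * m"] show ?thesis
    by simp
qed

lemma phi_M: "\<phi> (e (M N)) z = scalar_coeff \<phi> * e (M N) z"
proof (rule half_equivariant_solution_unique[where \<omega> = "2 * \<mu>"
      and h = "\<lambda>m n z. 1/2 * bracket \<mu> (e (M n)) (\<phi> (e (L m))) z"])
  show "(of_int n - of_int m + 2 * \<mu>) * \<phi> (e (M (m + n))) z
          = 1/2 * (adL_coeff \<mu> m z * \<phi> (e (M n)) (adL_source m z))
            - 1/2 * bracket \<mu> (e (M n)) (\<phi> (e (L m))) z" for m n z
    by (rule phi_L_M_equation[OF hd])
  show "(of_int n - of_int m + 2 * \<mu>) * (scalar_coeff \<phi> * e (M (m + n)) z)
          = 1/2 * (adL_coeff \<mu> m z * (scalar_coeff \<phi> * e (M n) (adL_source m z)))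
            - 1/2 * bracket \<mu> (e (M n)) (\<phi> (e (L m))) z" for m n z
  proof -
    have "bracket \<mu> (e (M n)) (\<phi> (e (L m))) z
            = - (of_int n - of_int m + 2 * \<mu>) * scalar_coeff \<phi> * e (M (m + n)) z"
      by (cases z) (simp_all add: bracket_M_left[OF fin_phi_e[OF hd]] phi_L_L e_apply)
    moreover have "adL_coeff \<mu> m z * e (M n) (adL_source m z)
                     = (of_int n - of_int m + 2 * \<mu>) * e (M (m + n)) z"
      by (cases z) (auto simp: e_apply)
    ultimately show ?thesis
      by algebra
  qed
qed

lemma phi_Y:
  "\<phi> (e (Y N)) z = scalar_coeff \<phi> * e (Y N) z
     + (case z of M k \<Rightarrow> \<phi> (e (L 0)) (Y (k - N - 1)) | _ \<Rightarrow> 0)"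
proof (rule half_equivariant_solution_unique[where \<omega> = "1/2 + \<mu>" and f = "\<lambda>n. \<phi> (e (Y n))"
      and g = "\<lambda>n z. scalar_coeff \<phi> * e (Y n) z
                 + (case z of M k \<Rightarrow> \<phi> (e (L 0)) (Y (k - n - 1)) | _ \<Rightarrow> 0)"
      and h = "\<lambda>m n z. 1/2 * bracket \<mu> (e (Y n)) (\<phi> (e (L m))) z"])
  show "(of_int n - of_int m + (1/2 + \<mu>)) * \<phi> (e (Y (m + n))) z
          = 1/2 * (adL_coeff \<mu> m z * \<phi> (e (Y n)) (adL_source m z))
            - 1/2 * bracket \<mu> (e (Y n)) (\<phi> (e (L m))) z" for m n z
    by (rule phi_L_Y_equation[OF hd])
  show "(of_int n - of_int m + (1/2 + \<mu>)) * (scalar_coeff \<phi> * e (Y (m + n)) z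
            + (case z of M k \<Rightarrow> \<phi> (e (L 0)) (Y (k - (m + n) - 1)) | _ \<Rightarrow> 0))
          = 1/2 * (adL_coeff \<mu> m z * (scalar_coeff \<phi> * e (Y n) (adL_source m z)
                + (case adL_source m z of M k \<Rightarrow> \<phi> (e (L 0)) (Y (k - n - 1)) | _ \<Rightarrow> 0)))
            - 1/2 * bracket \<mu> (e (Y n)) (\<phi> (e (L m))) z" for m n z
  proof (cases z)
    case (M k)
    define B where "B = \<phi> (e (L 0)) (Y (k - m - n - 1))"
    have "bracket \<mu> (e (Y n)) (\<phi> (e (L m))) z = of_int (k - n - 1 - n) * B"
      using M by (simp add: bracket_Y_left[OF fin_phi_e[OF hd]] phi_L_Y[of m] B_def algebra_simps)
    moreover have "\<phi> (e (L 0)) (Y (k - (m + n) - 1)) = B"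
      by (simp add: B_def diff_diff_eq)
    ultimately show ?thesis
      using M by (simp add: e_apply B_def[symmetric]) (simp add: field_simps)
  next
    case (Y k)
    have br: "bracket \<mu> (e (Y n)) (\<phi> (e (L m))) z
            = - (of_int n + 1/2 - of_int (k - n) + \<mu>) * scalar_coeff \<phi> * e (Y (m + n)) z"
      using Y by (simp add: bracket_Y_left[OF fin_phi_e[OF hd]] phi_L_L e_apply)
    show ?thesis
      unfolding br using Y by (cases "k = m + n") (simp_all add: e_apply field_simps)
  qed (simp_all add: bracket_Y_left[OF fin_phi_e[OF hd]] e_apply)
qed

lemma phi_L_expansion:
  "\<phi> (e (L m)) = (\<lambda>z. scalar_coeff \<phi> * e (L m) z
      + (\<Sum>t | \<phi> (e (L 0)) (M t) \<noteq> 0. \<phi> (e (L 0)) (M t) * e (M (m + t)) z)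
      + (\<Sum>t | \<phi> (e (L 0)) (Y t) \<noteq> 0. \<phi> (e (L 0)) (Y t) * e (Y (m + t)) z))"
proof (rule ext, goal_cases)
  case (1 z)
  show ?case
  proof (cases z)
    case (L k)
    then show ?thesis
      by (simp add: phi_L_L e_apply)
  next
    case (M k)
    have "(\<Sum>t | \<phi> (e (L 0)) (M t) \<noteq> 0. \<phi> (e (L 0)) (M t) * e (M (m + t)) z)
            = \<phi> (e (L 0)) (M (k - m))"
      by (rule sum_support_e[OF finite_phi_e_components(1)[OF hd]]) (auto simp: M)
    then show ?thesis
      using M by (simp add: phi_L_M[of m] e_apply)
  next
    case (Y k)
    have "(\<Sum>t | \<phi> (e (L 0)) (Y t) \<noteq> 0. \<phi> (e (L 0)) (Y t) * e (Y (m + t)) z)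
            = \<phi> (e (L 0)) (Y (k - m))"
      by (rule sum_support_e[OF finite_phi_e_components(2)[OF hd]]) (auto simp: Y)
    then show ?thesis
      using Y by (simp add: phi_L_Y[of m] e_apply)
  next
    case C
    then show ?thesis
      by (simp add: phi_L_C e_apply)
  qed
qed

lemma phi_Y_expansion:
  "\<phi> (e (Y m)) = (\<lambda>z. scalar_coeff \<phi> * e (Y m) z
      + (\<Sum>t | \<phi> (e (L 0)) (Y t) \<noteq> 0. \<phi> (e (L 0)) (Y t) * e (M (m + t + 1)) z))"
proof (rule ext, goal_cases)
  case (1 z)
  show ?case
  proof (cases z)
    case (M k)
    have "(\<Sum>t | \<phi> (e (L 0)) (Y t) \<noteq> 0. \<phi> (e (L 0)) (Y t) * e (M (m + t + 1)) z)
            = \<phi> (e (L 0)) (Y (k - m - 1))"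
      by (rule sum_support_e[OF finite_phi_e_components(2)[OF hd]]) (auto simp: M)
    then show ?thesis
      using M by (simp add: phi_Y e_apply)
  qed (simp_all add: phi_Y e_apply)
qed

lemma phi_M_expansion: "\<phi> (e (M m)) = vsmul (scalar_coeff \<phi>) (e (M m))"
  by (simp add: fun_eq_iff phi_M vsmul_def)

lemma phi_C_expansion: "\<phi> (e C) = vsmul (scalar_coeff \<phi>) (e C)"
  by (auto simp: fun_eq_iff vsmul_def e_apply phi_C_C phi_C_not_C)

end

theorem mainTheorem7:
  fixes \<mu> :: complex and \<phi> :: "(bas \<Rightarrow> complex) \<Rightarrow> (bas \<Rightarrow> complex)"
  assumes "(\<forall>k::int. \<mu> \<noteq> of_int k / 2) \<or> \<mu> \<in> \<int>"
    and "half_derivation \<mu> \<phi>"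
  shows "\<exists>lam1 (\<alpha>::int \<Rightarrow> complex) (\<beta>::int \<Rightarrow> complex).
           finite {t. \<alpha> t \<noteq> 0} \<and> finite {t. \<beta> t \<noteq> 0} \<and>
           (\<forall>m::int.
              \<phi> (e (L m)) = (\<lambda>z. lam1 * e (L m) z
                   + (\<Sum>t\<in>{t. \<alpha> t \<noteq> 0}. \<alpha> t * e (M (m + t)) z)
                   + (\<Sum>t\<in>{t. \<beta> t \<noteq> 0}. \<beta> t * e (Y (m + t)) z)) \<and>
              \<phi> (e (Y m)) = (\<lambda>z. lam1 * e (Y m) z
                   + (\<Sum>t\<in>{t. \<beta> t \<noteq> 0}. \<beta> t * e (M (m + t + 1)) z)) \<and>
              \<phi> (e (M m)) = vsmul lam1 (e (M m))) \<and>
           \<phi> (e C) = vsmul lam1 (e C)"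
proof -
  note hmu = half_integer_shift_nonzero[OF assms(1)]
  show ?thesis
    using finite_phi_e_components[OF assms(2), of "L 0"]
      phi_L_expansion[OF assms(2) hmu] phi_Y_expansion[OF assms(2) hmu]
      phi_M_expansion[OF assms(2) hmu] phi_C_expansion[OF assms(2) hmu]
    by (intro exI[of _ "scalar_coeff \<phi>"] exI[of _ "\<lambda>t. \<phi> (e (L 0)) (M t)"]
        exI[of _ "\<lambda>t. \<phi> (e (L 0)) (Y t)"]) blast
qed

end
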